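(* For every $i\in\{0,\ldots,k-n\}$, the interior of $C_i$ in $\mathcal{F}_{n+1,2d}$ is $$\mathrm{int}(C_i)=\{f\in\mathcal{F}_{n+1,2d} : \exists A\in\mathcal{G}^{-1}(f)\text{ such that } q_A(z)>0\text{ for all }[z]\in V_i(\mathbb{R})\}.$$
   Context: Let $n,d\geq 1$ be integers. $\mathcal{F}_{n+1,l}$ denotes the real vector space of real forms of degree $l$ in $X=(X_0,\ldots,X_n)$, with its Euclidean topology. Let $k:=\binom{n+d}{n}-1$. Order $I_{n+1,d}:=\{\alpha\in\mathbb{N}_0^{n+1}: |\alpha|=d\}$ lexicographically in decreasing order as $\alpha_0,\ldots,\alpha_k$ (so $\alpha_0=(d,0,\ldots,0)$, $\alpha_k=(0,\ldots,0,d)$), and set $m_j(X):=X^{\alpha_j}$. For $A\in\mathrm{Sym}_{k+1}(\mathbb{R})$ let $q_A(Z):=ZAZ^t$, $Z=(Z_0,\ldots,Z_k)$, and let $\mathcal{G}:\mathrm{Sym}_{k+1}(\mathbb{R})\to\mathcal{F}_{n+1,2d}$, $\mathcal{G}(A):=q_A(m_0(X),\ldots,m_k(X))$. For $i\in\{0,\ldots,k-n\}$ let $H_i:=\{[z]\in\mathbb{P}^k(\mathbb{C}) : \exists x\in\mathbb{C}^{n+1},\ (z_0,\ldots,z_{n+i})=(m_0(x),\ldots,m_{n+i}(x))\}$, $V_i$ its Zariski closure in $\mathbb{P}^k$, $V_i(\mathbb{R})$ its real points, and $C_i:=\{f\in\mathcal{F}_{n+1,2d} : \exists A\in\mathcal{G}^{-1}(f),\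 q_A(z)\geq 0\ \forall [z]\in V_i(\mathbb{R})\}$. (For a quadratic form the conditions $q_A(z)\geq 0$, $q_A(z)>0$ do not depend on the chosen representative $z$ of $[z]$.) *)

theory Defs
  imports "HOL-Analysis.Analysis" "HOL-Library.List_Lexorder"
begin

definition expvecs :: "nat \<Rightarrow> nat \<Rightarrow> nat list set" where
  "expvecs n d = {\<alpha>. length \<alpha> = Suc n \<and> sum_list \<alpha> = d}"

definition kdim :: "nat \<Rightarrow> nat \<Rightarrow> nat" where
  "kdim n d = ((n + d) choose n) - 1"

definition alpha :: "nat \<Rightarrow> nat \<Rightarrow> nat \<Rightarrow> nat list" where
  "alpha n d j = rev (sorted_list_of_set (expvecs n d)) ! j"

definition mono :: "nat \<Rightarrow> nat \<Rightarrow> nat \<Rightarrow> (nat \<Rightarrow> complex) \<Rightarrow> complex" where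
  "mono n d j x = (\<Prod>l\<le>n. x l ^ (alpha n d j ! l))"

(* F_{n+1,l}: real forms of degree l in X_0..X_n, represented by their coefficient
   functions (exponent vector \<mapsto> coefficient), supported on expvecs n l.
   The (product) topology on nat list \<Rightarrow> real induces the Euclidean topology on it. *)
definition forms :: "nat \<Rightarrow> nat \<Rightarrow> (nat list \<Rightarrow> real) set" where
  "forms n l = {f. \<forall>\<beta>. f \<beta> \<noteq> 0 \<longrightarrow> \<beta> \<in> expvecs n l}"

definition sym_mats :: "nat \<Rightarrow> (nat \<Rightarrow> nat \<Rightarrow> real) set" where
  "sym_mats k = {A. (\<forall>i j. A i j = A j i) \<and> (\<forall>i j. A i j \<noteq> 0 \<longrightarrow> i \<le> k \<and> j \<le> k)}"

definition qform :: "nat \<Rightarrow> (nat \<Rightarrow> nat \<Rightarrow> real) \<Rightarrow> (nat \<Rightarrow> real) \<Rightarrow> real" where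
  "qform k A z = (\<Sum>i\<le>k. \<Sum>j\<le>k. z i * A i j * z j)"

(* G(A) = q_A(m_0(X),...,m_k(X)), given by its coefficients:
   the coefficient of X^\<beta> is the sum of A i j over X^(alpha_i) X^(alpha_j) = X^\<beta> *)
definition Gmap :: "nat \<Rightarrow> nat \<Rightarrow> (nat \<Rightarrow> nat \<Rightarrow> real) \<Rightarrow> (nat list \<Rightarrow> real)" where
  "Gmap n d A = (\<lambda>\<beta>. \<Sum>i\<le>kdim n d. \<Sum>j\<le>kdim n d.
      if map2 (+) (alpha n d i) (alpha n d j) = \<beta> then A i j else 0)"

(* Points of P^k(C), represented by nonzero representatives z in C^(k+1)
   (coordinates z 0..z k, z j = 0 for j > k) *)
definition pts :: "nat \<Rightarrow> (nat \<Rightarrow> complex) set" where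
  "pts k = {z. (\<exists>j\<le>k. z j \<noteq> 0) \<and> (\<forall>j>k. z j = 0)}"

definition hom_poly :: "nat \<Rightarrow> nat \<Rightarrow> (nat list \<Rightarrow> complex) \<Rightarrow> bool" where
  "hom_poly k e p \<longleftrightarrow> (\<forall>\<beta>. p \<beta> \<noteq> 0 \<longrightarrow> \<beta> \<in> expvecs k e)"

definition heval :: "nat \<Rightarrow> nat \<Rightarrow> (nat list \<Rightarrow> complex) \<Rightarrow> (nat \<Rightarrow> complex) \<Rightarrow> complex" where
  "heval k e p z = (\<Sum>\<beta>\<in>expvecs k e. p \<beta> * (\<Prod>l\<le>k. z l ^ (\<beta> ! l)))"

definition zariski_closure :: "nat \<Rightarrow> (nat \<Rightarrow> complex) set \<Rightarrow> (nat \<Rightarrow> complex) set" where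
  "zariski_closure k S = {z \<in> pts k. \<forall>e p. hom_poly k e p \<and> (\<forall>w\<in>S. heval k e p w = 0)
       \<longrightarrow> heval k e p z = 0}"

definition Hset :: "nat \<Rightarrow> nat \<Rightarrow> nat \<Rightarrow> (nat \<Rightarrow> complex) set" where
  "Hset n d i = {z \<in> pts (kdim n d). \<exists>x. \<forall>j\<le>n+i. z j = mono n d j x}"

definition Vset :: "nat \<Rightarrow> nat \<Rightarrow> nat \<Rightarrow> (nat \<Rightarrow> complex) set" where
  "Vset n d i = zariski_closure (kdim n d) (Hset n d i)"

definition VRset :: "nat \<Rightarrow> nat \<Rightarrow> nat \<Rightarrow> (nat \<Rightarrow> real) set" where
  "VRset n d i = {y. (\<lambda>j. complex_of_real (y j)) \<in> Vset n d i}"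

definition Cset :: "nat \<Rightarrow> nat \<Rightarrow> nat \<Rightarrow> (nat list \<Rightarrow> real) set" where
  "Cset n d i = {f \<in> forms n (2*d). \<exists>A \<in> sym_mats (kdim n d). Gmap n d A = f \<and>
      (\<forall>y\<in>VRset n d i. qform (kdim n d) A y \<ge> 0)}"

end

theory Submission
  imports Defs
begin

text \<open>
  If \<open>q\<^sub>A > 0\<close> on \<open>V\<^sub>i(\<real>)\<close>, compactness of the
  trace of this closed cone on the unit sphere gives \<open>q\<^sub>A(y) \<ge> m |y|\<^sup>2\<close> with \<open>m > 0\<close>. Since \<open>\<G>\<close>
  has a linear right inverse whose entries are bounded by the coefficients of its argument, every
  form \<open>h\<close> whose coefficients are close to those of \<open>f = \<G>(A)\<close> is \<open>\<G>(A + E)\<close> with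
  \<open>|q\<^sub>E(y)| \<le> m |y|\<^sup>2\<close>, hence lies in \<open>C\<^sub>i\<close>. Conversely, if \<open>f\<close> is interior then
  \<open>f - \<delta> \<G>(I) \<in> C\<^sub>i\<close> for some \<open>\<delta> > 0\<close>, say \<open>f - \<delta> \<G>(I) = \<G>(A')\<close>, and \<open>A = A' + \<delta> I\<close> satisfies
  \<open>q\<^sub>A(y) \<ge> \<delta> |y|\<^sup>2 > 0\<close> on \<open>V\<^sub>i(\<real>)\<close>.
\<close>

lemma card_expvecs: "card (expvecs n d) = Suc (kdim n d)"
proof -
  have "card (expvecs n d) = (d + Suc n - 1) choose d"
    unfolding expvecs_def using card_length_sum_list[of "Suc n" d] by simp
  also have "\<dots> = (n + d) choose n"
    using binomial_symmetric[of n "n + d"] by (simp add: add.commute)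
  finally show ?thesis
    unfolding kdim_def
    by (metis Suc_diff_1 bot_nat_0.not_eq_extremum zero_less_binomial_iff le_add1)
qed

lemma finite_expvecs: "finite (expvecs n d)"
  using card_expvecs[of n d] card.infinite by fastforce

lemma alpha_in_expvecs: "j \<le> kdim n d \<Longrightarrow> alpha n d j \<in> expvecs n d"
  unfolding alpha_def
  by (metis card_expvecs finite_expvecs length_rev length_sorted_list_of_set less_Suc_eq_le
      nth_mem set_rev set_sorted_list_of_set)

lemma expvecs_obtain_alpha:
  assumes "a \<in> expvecs n d"
  shows "\<exists>j\<le>kdim n d. alpha n d j = a"
proof -
  let ?L = "rev (sorted_list_of_set (expvecs n d))"
  have "a \<in> set ?L"
    using assms finite_expvecs by simp
  then obtain j where "j < length ?L" "?L ! j = a"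
    by (metis in_set_conv_nth)
  then show ?thesis
    unfolding alpha_def using card_expvecs[of n d] finite_expvecs
    by (metis length_rev length_sorted_list_of_set less_Suc_eq_le)
qed

lemma sum_list_map2_plus:
  "length a = length b \<Longrightarrow>
    sum_list (map2 (+) a b) = sum_list a + sum_list (b :: 'a :: comm_monoid_add list)"
  by (induction a b rule: list_induct2) (simp_all add: add_ac)

lemma map2_plus_commute: "map2 (+) a b = map2 (+) b (a :: 'a :: ab_semigroup_add list)"
proof (induction a arbitrary: b)
  case (Cons x a)
  then show ?case by (cases b) (simp_all add: add.commute)
qed simp

lemma sum_list_split:
  fixes \<beta> :: "nat list"
  assumes "a \<le> sum_list \<beta>"
  shows "\<exists>\<gamma> \<delta>. length \<gamma> = length \<beta> \<and> length \<delta> = length \<beta> \<and>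
    sum_list \<gamma> = a \<and> map2 (+) \<gamma> \<delta> = \<beta>"
  using assms
proof (induction \<beta> arbitrary: a)
  case (Cons x \<beta>)
  then have "a - min a x \<le> sum_list \<beta>"
    by simp
  then obtain \<gamma> \<delta> where "length \<gamma> = length \<beta>" "length \<delta> = length \<beta>"
      "sum_list \<gamma> = a - min a x" "map2 (+) \<gamma> \<delta> = \<beta>"
    using Cons.IH by blast
  then show ?case
    by (intro exI[of _ "min a x # \<gamma>"] exI[of _ "(x - min a x) # \<delta>"]) simp
qed simp

lemma map2_plus_alpha_in_expvecs:
  "i \<le> kdim n d \<Longrightarrow> j \<le> kdim n d \<Longrightarrow>
    map2 (+) (alpha n d i) (alpha n d j) \<in> expvecs n (2 * d)"
  using alpha_in_expvecs[of i n d] alpha_in_expvecs[of j n d]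
  by (auto simp: expvecs_def sum_list_map2_plus)

lemma expvecs_double_obtain_alpha:
  assumes "\<beta> \<in> expvecs n (2 * d)"
  shows "\<exists>i\<le>kdim n d. \<exists>j\<le>kdim n d. map2 (+) (alpha n d i) (alpha n d j) = \<beta>"
proof -
  have \<beta>: "length \<beta> = Suc n" "sum_list \<beta> = 2 * d"
    using assms by (auto simp: expvecs_def)
  then obtain \<gamma> \<delta> where split: "length \<gamma> = Suc n" "length \<delta> = Suc n" "sum_list \<gamma> = d"
      "map2 (+) \<gamma> \<delta> = \<beta>"
    using sum_list_split[of d \<beta>] by auto
  then have "sum_list \<delta> = d"
    using \<beta>(2) sum_list_map2_plus[of \<gamma> \<delta>] by simp
  then have "\<gamma> \<in> expvecs n d" "\<delta> \<in> expvecs n d"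
    using split by (auto simp: expvecs_def)
  then show ?thesis
    using split(4) by (metis expvecs_obtain_alpha)
qed

lemma forms_diff_scaled:
  assumes "f \<in> forms n l" "g \<in> forms n l"
  shows "(\<lambda>\<beta>. f \<beta> - c * g \<beta>) \<in> forms n l"
  unfolding forms_def mem_Collect_eq
proof (intro allI impI)
  fix \<beta>
  assume "f \<beta> - c * g \<beta> \<noteq> 0"
  then have "f \<beta> \<noteq> 0 \<or> g \<beta> \<noteq> 0"
    by auto
  then show "\<beta> \<in> expvecs n l"
    using assms unfolding forms_def by blast
qed

lemma Gmap_in_forms: "Gmap n d A \<in> forms n (2 * d)"
  unfolding forms_def mem_Collect_eq
proof (intro allI impI)
  fix \<beta>
  assume "Gmap n d A \<beta> \<noteq> 0"
  then obtain i where "i \<le> kdim n d"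
      "(\<Sum>j\<le>kdim n d. if map2 (+) (alpha n d i) (alpha n d j) = \<beta> then A i j else 0) \<noteq> 0"
    unfolding Gmap_def by (auto elim: sum.not_neutral_contains_not_neutral)
  moreover from this(2) obtain j where "j \<le> kdim n d" "map2 (+) (alpha n d i) (alpha n d j) = \<beta>"
    by (auto elim: sum.not_neutral_contains_not_neutral split: if_splits)
  ultimately show "\<beta> \<in> expvecs n (2 * d)"
    using map2_plus_alpha_in_expvecs by blast
qed

lemma Gmap_add: "Gmap n d (\<lambda>i j. A i j + B i j) = (\<lambda>\<beta>. Gmap n d A \<beta> + Gmap n d B \<beta>)"
  unfolding Gmap_def sum.distrib[symmetric] by (intro ext sum.cong refl) simp

lemma Gmap_smult: "Gmap n d (\<lambda>i j. c * A i j) = (\<lambda>\<beta>. c * Gmap n d A \<beta>)"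
  unfolding Gmap_def sum_distrib_left by (intro ext sum.cong refl) simp

definition pair_count :: "nat \<Rightarrow> nat \<Rightarrow> nat list \<Rightarrow> nat" where
  "pair_count n d \<beta> = card {p \<in> {..kdim n d} \<times> {..kdim n d}.
      map2 (+) (alpha n d (fst p)) (alpha n d (snd p)) = \<beta>}"

definition Gmap_rinv :: "nat \<Rightarrow> nat \<Rightarrow> (nat list \<Rightarrow> real) \<Rightarrow> nat \<Rightarrow> nat \<Rightarrow> real" where
  "Gmap_rinv n d h i j = (if i \<le> kdim n d \<and> j \<le> kdim n d then
      h (map2 (+) (alpha n d i) (alpha n d j)) /
        real (pair_count n d (map2 (+) (alpha n d i) (alpha n d j)))
    else 0)"

lemma sum_atMost_atMost_if_const:
  "(\<Sum>i\<le>(K :: nat). \<Sum>j\<le>K. if P i j then c else 0) =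
    (c :: 'a :: comm_semiring_1) * of_nat (card {p \<in> {..K} \<times> {..K}. P (fst p) (snd p)})"
proof -
  have "(\<Sum>i\<le>K. \<Sum>j\<le>K. if P i j then c else 0) =
      (\<Sum>p\<in>{..K} \<times> {..K}. if P (fst p) (snd p) then c else 0)"
    by (simp add: sum.cartesian_product split_beta)
  also have "\<dots> = (\<Sum>p\<in>{p \<in> {..K} \<times> {..K}. P (fst p) (snd p)}. c)"
    by (subst sum.inter_filter) auto
  finally show ?thesis
    by (simp add: mult.commute)
qed

lemma pair_count_pos:
  "i \<le> kdim n d \<Longrightarrow> j \<le> kdim n d \<Longrightarrow>
    0 < pair_count n d (map2 (+) (alpha n d i) (alpha n d j))"
  unfolding pair_count_def by (subst card_gt_0_iff) auto

lemma Gmap_Gmap_rinv: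
  assumes "h \<in> forms n (2 * d)"
  shows "Gmap n d (Gmap_rinv n d h) = h"
proof
  fix \<beta>
  have "Gmap n d (Gmap_rinv n d h) \<beta> = (\<Sum>i\<le>kdim n d. \<Sum>j\<le>kdim n d.
      if map2 (+) (alpha n d i) (alpha n d j) = \<beta> then h \<beta> / real (pair_count n d \<beta>) else 0)"
    unfolding Gmap_def Gmap_rinv_def by (auto intro!: sum.cong)
  also have "\<dots> = h \<beta> / real (pair_count n d \<beta>) * real (pair_count n d \<beta>)"
    unfolding sum_atMost_atMost_if_const pair_count_def by simp
  also have "\<dots> = h \<beta>"
  proof (cases "h \<beta> = 0")
    case False
    then have "\<beta> \<in> expvecs n (2 * d)"
      using assms by (auto simp: forms_def)
    then have "pair_count n d \<beta> \<noteq> 0"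
      using expvecs_double_obtain_alpha pair_count_pos by fastforce
    then show ?thesis
      by simp
  qed simp
  finally show "Gmap n d (Gmap_rinv n d h) \<beta> = h \<beta>" .
qed

lemma Gmap_rinv_in_sym_mats: "Gmap_rinv n d h \<in> sym_mats (kdim n d)"
  unfolding sym_mats_def Gmap_rinv_def by (auto simp: map2_plus_commute)

lemma abs_Gmap_rinv_le:
  assumes "\<forall>\<beta>\<in>expvecs n (2 * d). \<bar>h \<beta>\<bar> \<le> e" and "0 \<le> e"
  shows "\<bar>Gmap_rinv n d h i j\<bar> \<le> e"
proof (cases "i \<le> kdim n d \<and> j \<le> kdim n d")
  case True
  define \<beta> where "\<beta> = map2 (+) (alpha n d i) (alpha n d j)"
  have "1 \<le> real (pair_count n d \<beta>)"
    using pair_count_pos True unfolding \<beta>_def by (simp add: Suc_le_eq)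
  then have "\<bar>h \<beta> / real (pair_count n d \<beta>)\<bar> \<le> \<bar>h \<beta>\<bar>"
    by (simp add: abs_divide divide_le_eq_1 mult_le_cancel_left1 divide_le_eq)
  also have "\<bar>h \<beta>\<bar> \<le> e"
    using assms(1) map2_plus_alpha_in_expvecs True unfolding \<beta>_def by blast
  finally show ?thesis
    using True unfolding Gmap_rinv_def \<beta>_def by simp
qed (use assms(2) in \<open>auto simp: Gmap_rinv_def\<close>)

definition unit_mat :: "nat \<Rightarrow> nat \<Rightarrow> nat \<Rightarrow> real" where
  "unit_mat K i j = (if i \<le> K \<and> i = j then 1 else 0)"

lemma unit_mat_in_sym_mats: "unit_mat K \<in> sym_mats K"
  unfolding sym_mats_def unit_mat_def by auto

lemma sym_mats_add:
  "A \<in> sym_mats K \<Longrightarrow> B \<in> sym_mats K \<Longrightarrow> (\<lambda>i j. A i j + B i j) \<in> sym_mats K"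
  unfolding sym_mats_def by (simp, metis add.right_neutral)

lemma sym_mats_smult: "A \<in> sym_mats K \<Longrightarrow> (\<lambda>i j. c * A i j) \<in> sym_mats K"
  unfolding sym_mats_def by auto

lemma qform_add: "qform K (\<lambda>i j. A i j + B i j) y = qform K A y + qform K B y"
  unfolding qform_def by (simp add: algebra_simps sum.distrib)

lemma qform_smult: "qform K (\<lambda>i j. c * A i j) y = c * qform K A y"
  unfolding qform_def by (simp add: sum_distrib_left algebra_simps)

lemma qform_scale: "qform K A (\<lambda>j. c * y j) = c\<^sup>2 * qform K A y"
  unfolding qform_def by (simp add: sum_distrib_left power2_eq_square algebra_simps)

lemma qform_unit_mat: "qform K (unit_mat K) y = (\<Sum>j\<le>K. (y j)\<^sup>2)"
proof -
  have "qform K (unit_mat K) y = (\<Sum>i\<le>K. \<Sum>j\<le>K. if j = i then y i * y j else 0)"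
    unfolding qform_def unit_mat_def by (intro sum.cong) auto
  then show ?thesis
    by (simp add: power2_eq_square)
qed

lemma qform_abs_le:
  assumes "\<And>i j. i \<le> K \<Longrightarrow> j \<le> K \<Longrightarrow> \<bar>E i j\<bar> \<le> e"
  shows "\<bar>qform K E y\<bar> \<le> e * real (Suc K) * (\<Sum>j\<le>K. (y j)\<^sup>2)"
proof -
  have "\<bar>qform K E y\<bar> \<le> (\<Sum>i\<le>K. \<Sum>j\<le>K. \<bar>y i\<bar> * e * \<bar>y j\<bar>)"
    unfolding qform_def
    by (intro order_trans[OF sum_abs] sum_mono order_trans[OF sum_abs])
      (simp add: abs_mult assms mult_left_mono mult_right_mono)
  also have "\<dots> = e * (\<Sum>i\<le>K. \<bar>y i\<bar>)\<^sup>2"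
    by (simp add: power2_eq_square sum_product sum_distrib_left algebra_simps)
  also have "\<dots> \<le> e * ((\<Sum>i\<le>K. \<bar>y i\<bar>\<^sup>2) * card {..K})"
    using assms[of 0 0] by (intro mult_left_mono sum_squared_le_sum_of_squares) auto
  finally show ?thesis
    by (simp add: algebra_simps)
qed

lemma continuous_on_coordinate [continuous_intros]:
  "continuous_on S (\<lambda>y :: nat \<Rightarrow> real. y l)"
  by (rule continuous_on_subset[OF continuous_on_product_coordinates]) simp

lemma continuous_on_qform: "continuous_on S (qform K A)"
  unfolding qform_def by (intro continuous_intros)

definition coord_sphere :: "nat \<Rightarrow> (nat \<Rightarrow> real) set" where
  "coord_sphere K = {y. (\<forall>j>K. y j = 0) \<and> (\<Sum>j\<le>K. (y j)\<^sup>2) = 1}"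

lemma compact_coord_sphere: "compact (coord_sphere K)"
proof -
  define B where "B = PiE UNIV (\<lambda>j. if j \<le> K then {-1..1 :: real} else {0})"
  have "compactin (product_topology (\<lambda>_. euclidean) UNIV) B"
    unfolding B_def compactin_PiE by auto
  then have "compact B"
    unfolding euclidean_product_topology by simp
  moreover have "coord_sphere K = B \<inter> {y. (\<Sum>j\<le>K. (y j)\<^sup>2) = 1}"
  proof -
    have "\<bar>y j\<bar> \<le> 1" if "(\<Sum>j\<le>K. (y j)\<^sup>2) = 1" "j \<le> K" for y :: "nat \<Rightarrow> real" and j
    proof -
      have "(y j)\<^sup>2 \<le> (\<Sum>j\<le>K. (y j)\<^sup>2)"
        by (rule member_le_sum) (use that in auto)
      then show ?thesis
        using that by (simp add: abs_square_le_1)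
    qed
    then show ?thesis
      unfolding coord_sphere_def B_def by (auto simp: PiE_iff abs_le_iff split: if_splits)
  qed
  ultimately show ?thesis
    by (simp add: compact_Int_closed closed_Collect_eq continuous_intros)
qed

lemma compact_pos_lower_bound:
  fixes f :: "'a :: topological_space \<Rightarrow> real"
  assumes "compact S" "continuous_on S f" "\<And>x. x \<in> S \<Longrightarrow> 0 < f x"
  shows "\<exists>m>0. \<forall>x\<in>S. m \<le> f x"
proof (cases "S = {}")
  case False
  then obtain x where "x \<in> S" "\<forall>y\<in>S. f x \<le> f y"
    using continuous_attains_inf[OF assms(1) _ assms(2)] by blast
  then show ?thesis
    using assms(3) by blast
qed (auto intro: exI[of _ 1])

lemma qform_coercive_on_cone:
  assumes cone: "\<And>y c. y \<in> V \<Longrightarrow> 0 < c \<Longrightarrow> (\<lambda>j. c * y j) \<in> V"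
    and closed: "closed (V \<inter> coord_sphere K)"
    and support: "\<And>y j. y \<in> V \<Longrightarrow> K < j \<Longrightarrow> y j = 0"
    and pos: "\<And>y. y \<in> V \<Longrightarrow> 0 < qform K A y"
  shows "\<exists>m>0. \<forall>y\<in>V. m * (\<Sum>j\<le>K. (y j)\<^sup>2) \<le> qform K A y"
proof -
  have "V \<inter> coord_sphere K = coord_sphere K \<inter> (V \<inter> coord_sphere K)"
    by blast
  then have "compact (V \<inter> coord_sphere K)"
    using compact_Int_closed[OF compact_coord_sphere[of K] closed] by simp
  then obtain m where m: "0 < m" "\<forall>x\<in>V \<inter> coord_sphere K. m \<le> qform K A x"
    using compact_pos_lower_bound[OF _ continuous_on_qform] pos by blast
  have "m * (\<Sum>j\<le>K. (y j)\<^sup>2) \<le> qform K A y" if y: "y \<in> V" for y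
  proof (cases "(\<Sum>j\<le>K. (y j)\<^sup>2) = 0")
    case True
    then have "qform K A y = 0"
      unfolding qform_def by (simp add: sum_nonneg_eq_0_iff)
    then show ?thesis
      using True by simp
  next
    case False
    define s where "s = (\<Sum>j\<le>K. (y j)\<^sup>2)"
    have s: "0 < s"
      using False unfolding s_def by (simp add: order_less_le sum_nonneg)
    define y' where "y' = (\<lambda>j. (1 / sqrt s) * y j)"
    have "(\<Sum>j\<le>K. (y' j)\<^sup>2) = 1"
      using s unfolding y'_def s_def
      by (simp add: power_mult_distrib power_divide sum_divide_distrib[symmetric])
    moreover have "y' \<in> V"
      using cone[OF y, of "1 / sqrt s"] s unfolding y'_def by simp
    ultimately have "y' \<in> V \<inter> coord_sphere K"
      using support[OF y] unfolding y'_def coord_sphere_def by simp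
    then have "m \<le> qform K A y'"
      using m(2) by blast
    also have "\<dots> = qform K A y / s"
      unfolding y'_def qform_scale using s by (simp add: power_divide)
    finally show ?thesis
      using s unfolding s_def by (simp add: le_divide_eq mult.commute)
  qed
  then show ?thesis
    using m(1) by blast
qed

lemma heval_scale: "heval k e p (\<lambda>j. a * z j) = a ^ e * heval k e p z"
  unfolding heval_def sum_distrib_left
proof (rule sum.cong[OF refl])
  fix \<beta>
  assume \<beta>: "\<beta> \<in> expvecs k e"
  have "(\<Sum>l\<le>k. \<beta> ! l) = sum_list \<beta>"
    using \<beta> by (simp add: expvecs_def sum_list_sum_nth atLeast0LessThan lessThan_Suc_atMost)
  then have "(\<Prod>l\<le>k. a ^ (\<beta> ! l)) = a ^ e"
    using \<beta> by (simp add: power_sum[symmetric] expvecs_def)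
  then show "p \<beta> * (\<Prod>l\<le>k. (a * z l) ^ (\<beta> ! l)) =
      a ^ e * (p \<beta> * (\<Prod>l\<le>k. z l ^ (\<beta> ! l)))"
    by (simp add: power_mult_distrib prod.distrib)
qed

lemma zariski_closure_scale:
  "z \<in> zariski_closure k S \<Longrightarrow> c \<noteq> 0 \<Longrightarrow> (\<lambda>j. c * z j) \<in> zariski_closure k S"
  unfolding zariski_closure_def pts_def by (auto simp: heval_scale)

lemma continuous_on_heval_of_real:
  "continuous_on S (\<lambda>y :: nat \<Rightarrow> real. heval k e p (\<lambda>j. complex_of_real (y j)))"
  unfolding heval_def by (intro continuous_intros)

lemma closed_real_zariski_closure_Int_coord_sphere:
  "closed ({y. (\<lambda>j. complex_of_real (y j)) \<in> zariski_closure k S} \<inter> coord_sphere k)"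
proof -
  let ?vanish = "{(e, p). hom_poly k e p \<and> (\<forall>w\<in>S. heval k e p w = 0)}"
  have "(\<lambda>j. complex_of_real (y j)) \<in> pts k" if "y \<in> coord_sphere k" for y
  proof -
    have "\<exists>j\<le>k. y j \<noteq> 0"
    proof (rule ccontr)
      assume "\<not> (\<exists>j\<le>k. y j \<noteq> 0)"
      then show False
        using that unfolding coord_sphere_def by simp
    qed
    then show ?thesis
      using that unfolding pts_def coord_sphere_def by auto
  qed
  then have "{y. (\<lambda>j. complex_of_real (y j)) \<in> zariski_closure k S} \<inter> coord_sphere k =
      (\<Inter>q\<in>?vanish. {y. heval k (fst q) (snd q) (\<lambda>j. complex_of_real (y j)) = 0}) \<inter> coord_sphere k"
    unfolding zariski_closure_def by auto
  also have "closed \<dots>"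
    by (intro closed_Int closed_INT ballI closed_Collect_eq continuous_on_heval_of_real
        continuous_on_const compact_imp_closed compact_coord_sphere)
  finally show ?thesis .
qed

lemma VRset_scale: "y \<in> VRset n d i \<Longrightarrow> c \<noteq> 0 \<Longrightarrow> (\<lambda>j. c * y j) \<in> VRset n d i"
  unfolding VRset_def Vset_def using zariski_closure_scale[of _ _ _ "complex_of_real c"] by simp

lemma VRset_support: "y \<in> VRset n d i \<Longrightarrow> kdim n d < j \<Longrightarrow> y j = 0"
  unfolding VRset_def Vset_def zariski_closure_def pts_def by auto

lemma VRset_sum_squares_pos: "y \<in> VRset n d i \<Longrightarrow> 0 < (\<Sum>j\<le>kdim n d. (y j)\<^sup>2)"
proof -
  assume "y \<in> VRset n d i"
  then obtain j where j: "j \<le> kdim n d" "y j \<noteq> 0"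
    unfolding VRset_def Vset_def zariski_closure_def pts_def by auto
  then have "0 < (y j)\<^sup>2"
    by simp
  also have "\<dots> \<le> (\<Sum>j\<le>kdim n d. (y j)\<^sup>2)"
    by (rule member_le_sum) (use j in auto)
  finally show ?thesis .
qed

lemma interior_of_forms_shift:
  assumes "f \<in> top_of_set (forms n l) interior_of C" and "g \<in> forms n l"
  shows "\<exists>\<delta>>0. (\<lambda>\<beta>. f \<beta> - \<delta> * g \<beta>) \<in> C"
proof -
  obtain T where T: "openin (top_of_set (forms n l)) T" "f \<in> T" "T \<subseteq> C"
    using assms(1) unfolding interior_of_def by blast
  then obtain W where W: "open W" "T = forms n l \<inter> W"
    by (auto simp: openin_open)
  define p where "p t = (\<lambda>\<beta>. f \<beta> - t * g \<beta>)" for t :: real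
  have "continuous_on UNIV p"
    unfolding p_def by (intro continuous_intros)
  then have "open (p -` W)"
    using continuous_on_open_vimage[of UNIV p] W(1) by simp
  moreover have "0 \<in> p -` W"
    using T W unfolding p_def by simp
  ultimately obtain e where e: "0 < e" "ball 0 e \<subseteq> p -` W"
    using open_contains_ball by blast
  then have "e / 2 \<in> p -` W"
    by (intro subsetD[OF e(2)]) simp
  then have "p (e / 2) \<in> W"
    by simp
  moreover have "p (e / 2) \<in> forms n l"
    unfolding p_def using T(2) W(2) assms(2) by (intro forms_diff_scaled) auto
  ultimately have "p (e / 2) \<in> C"
    using T W by blast
  then show ?thesis
    using e(1) unfolding p_def by (intro exI[of _ "e / 2"]) simp
qed

lemma interior_of_Cset_imp_strictly_positive:
  assumes "f \<in> top_of_set (forms n (2 * d)) interior_of Cset n d i"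
  shows "\<exists>A\<in>sym_mats (kdim n d). Gmap n d A = f \<and> (\<forall>y\<in>VRset n d i. 0 < qform (kdim n d) A y)"
proof -
  let ?K = "kdim n d"
  obtain \<delta> where "0 < \<delta>" and "(\<lambda>\<beta>. f \<beta> - \<delta> * Gmap n d (unit_mat ?K) \<beta>) \<in> Cset n d i"
    using interior_of_forms_shift[OF assms Gmap_in_forms] by blast
  then obtain A' where A': "A' \<in> sym_mats ?K" "Gmap n d A' = (\<lambda>\<beta>. f \<beta> - \<delta> * Gmap n d (unit_mat ?K) \<beta>)"
      "\<forall>y\<in>VRset n d i. 0 \<le> qform ?K A' y"
    unfolding Cset_def by blast
  define A where "A = (\<lambda>i j. A' i j + \<delta> * unit_mat ?K i j)"
  have "A \<in> sym_mats ?K"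
    unfolding A_def by (intro sym_mats_add sym_mats_smult A'(1) unit_mat_in_sym_mats)
  moreover have "Gmap n d A = f"
    unfolding A_def Gmap_add Gmap_smult A'(2) by simp
  moreover have "0 < qform ?K A y" if "y \<in> VRset n d i" for y
  proof -
    have "qform ?K A y = qform ?K A' y + \<delta> * (\<Sum>j\<le>?K. (y j)\<^sup>2)"
      unfolding A_def qform_add qform_smult qform_unit_mat ..
    moreover have "0 < \<delta> * (\<Sum>j\<le>?K. (y j)\<^sup>2)"
      using VRset_sum_squares_pos[OF that] \<open>0 < \<delta>\<close> by simp
    ultimately show ?thesis
      using A'(3) that by fastforce
  qed
  ultimately show ?thesis
    by blast
qed

lemma coeffs_close_in_Cset:
  assumes A: "A \<in> sym_mats (kdim n d)" "Gmap n d A = f"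
    and coercive: "\<forall>y\<in>VRset n d i. m * (\<Sum>j\<le>kdim n d. (y j)\<^sup>2) \<le> qform (kdim n d) A y"
    and "0 \<le> m" and h: "h \<in> forms n (2 * d)"
    and close: "\<forall>\<beta>\<in>expvecs n (2 * d). \<bar>h \<beta> - f \<beta>\<bar> \<le> m / real (Suc (kdim n d))"
  shows "h \<in> Cset n d i"
proof -
  let ?K = "kdim n d"
  define E where "E = Gmap_rinv n d (\<lambda>\<beta>. h \<beta> - f \<beta>)"
  have "(\<lambda>\<beta>. h \<beta> - f \<beta>) \<in> forms n (2 * d)"
    using forms_diff_scaled[OF h Gmap_in_forms[of n d A], where c = 1] A(2) by simp
  then have "Gmap n d (\<lambda>i j. A i j + E i j) = h"
    unfolding Gmap_add E_def by (simp add: Gmap_Gmap_rinv A(2))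
  moreover have "(\<lambda>i j. A i j + E i j) \<in> sym_mats ?K"
    unfolding E_def by (intro sym_mats_add A(1) Gmap_rinv_in_sym_mats)
  moreover have "0 \<le> qform ?K (\<lambda>i j. A i j + E i j) y" if y: "y \<in> VRset n d i" for y
  proof -
    have "\<bar>E i j\<bar> \<le> m / real (Suc ?K)" for i j
      unfolding E_def using close \<open>0 \<le> m\<close> by (intro abs_Gmap_rinv_le) auto
    then have "\<bar>qform ?K E y\<bar> \<le> m * (\<Sum>j\<le>?K. (y j)\<^sup>2)"
      using qform_abs_le[of ?K E "m / real (Suc ?K)" y] by simp
    moreover have "m * (\<Sum>j\<le>?K. (y j)\<^sup>2) \<le> qform ?K A y"
      using coercive y by blast
    ultimately show ?thesis
      unfolding qform_add by linarith
  qed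
  ultimately show ?thesis
    using h unfolding Cset_def by blast
qed

lemma strictly_positive_imp_interior_of_Cset:
  assumes A: "A \<in> sym_mats (kdim n d)" "Gmap n d A = f"
    and pos: "\<forall>y\<in>VRset n d i. 0 < qform (kdim n d) A y"
  shows "f \<in> top_of_set (forms n (2 * d)) interior_of Cset n d i"
proof -
  let ?K = "kdim n d"
  have "closed (VRset n d i \<inter> coord_sphere ?K)"
    using closed_real_zariski_closure_Int_coord_sphere[of ?K "Hset n d i"]
    unfolding VRset_def Vset_def .
  then obtain m where m: "0 < m" "\<forall>y\<in>VRset n d i. m * (\<Sum>j\<le>?K. (y j)\<^sup>2) \<le> qform ?K A y"
    using qform_coercive_on_cone[of "VRset n d i" ?K A] VRset_scale VRset_support pos
    by (metis less_numeral_extra(3))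
  define \<eta> where "\<eta> = m / real (Suc ?K)"
  define U where "U = {h. \<forall>\<beta>\<in>expvecs n (2 * d). \<bar>h \<beta> - f \<beta>\<bar> < \<eta>}"
  define N where "N = forms n (2 * d) \<inter> U"
  have "U = {h. \<forall>\<beta>\<in>expvecs n (2 * d). h (id \<beta>) \<in> ball (f \<beta>) \<eta>}"
    unfolding U_def by (auto simp: dist_real_def abs_minus_commute)
  also have "open \<dots>"
    by (rule product_topology_basis') (simp_all add: finite_expvecs)
  finally have "openin (top_of_set (forms n (2 * d))) N"
    unfolding N_def by (rule openin_open_Int)
  moreover have "f \<in> N"
    using A(2) Gmap_in_forms m(1) unfolding N_def U_def \<eta>_def by auto
  moreover have "N \<subseteq> Cset n d i"
    unfolding N_def U_def \<eta>_def using coeffs_close_in_Cset[OF A m(2)] m(1) by (auto simp: less_imp_le)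
  ultimately show ?thesis
    by (meson interior_of_maximal subsetD)
qed

theorem theorem2p3:
  fixes n d i :: nat
  assumes "1 \<le> n" and "1 \<le> d" and "i \<le> kdim n d - n"
  shows "(subtopology euclidean (forms n (2*d))) interior_of (Cset n d i) =
    {f \<in> forms n (2*d). \<exists>A \<in> sym_mats (kdim n d). Gmap n d A = f \<and>
      (\<forall>y\<in>VRset n d i. qform (kdim n d) A y > 0)}"
proof (intro equalityI subsetI)
  fix f
  assume f: "f \<in> top_of_set (forms n (2 * d)) interior_of Cset n d i"
  then have "f \<in> forms n (2 * d)"
    using interior_of_subset_topspace by fastforce
  then show "f \<in> {f \<in> forms n (2*d). \<exists>A \<in> sym_mats (kdim n d). Gmap n d A = f \<and>
      (\<forall>y\<in>VRset n d i. qform (kdim n d) A y > 0)}"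
    using interior_of_Cset_imp_strictly_positive[OF f] by blast
qed (auto intro: strictly_positive_imp_interior_of_Cset)

end
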